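(* For $k\ge4$ and $d\in[(2^{k-1}-2)k\log2,\;2^{k-1}k\log2]$ if $k\ge5$, resp. $d\in[16.7,\;32\log2]$ if $k=4$, the equation $\Psi_d(x)=x$ has a unique solution in $[\frac12-\frac1{2^k},\frac12]$.
   Context: $\hat\Psi(x)=\frac{1-2x^{k-1}}{1-x^{k-1}}$, $\dot\Psi(v)=\frac{1-v^{d-1}}{2-v^{d-1}}$, $\Psi_d=\dot\Psi\circ\hat\Psi$ ($d$ real). *)

theory Defs
  imports Complex_Main
begin

definition psi_hat :: "nat \<Rightarrow> real \<Rightarrow> real" where
  "psi_hat k x = (1 - 2 * x ^ (k - 1)) / (1 - x ^ (k - 1))"

text \<open>d is real, so v to the power d-1 is the real power (powr); v is positive in the relevant range.\<close>
definition psi_dot :: "real \<Rightarrow> real \<Rightarrow> real" where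
  "psi_dot d v = (1 - v powr (d - 1)) / (2 - v powr (d - 1))"

definition Psi :: "nat \<Rightarrow> real \<Rightarrow> real \<Rightarrow> real" where
  "Psi k d = psi_dot d \<circ> psi_hat k"

end

(* With phi t = ln ((1 - t) / (1 - 2 t)) one has psi_hat k x = exp (- phi (x^(k-1))), and
   (1 - w) / (2 - w) = x iff w = exp (- phi x); so on (0, 1/2) the fixed points of Psi_d are the
   solutions of phi x / phi (x^(k-1)) = d - 1.
   Existence: Psi_d (1/2) < 1/2, while at the left end a = 1/2 - 2^-k the lower bound on d gives
   phi a <= (d - 1) phi (a^(k-1)), i.e. Psi_d a >= a; apply the intermediate value theorem.
   Uniqueness: phi x / phi (x^(k-1)) is strictly increasing on [a, 1/2). Since y / (1 - y) <= phi y,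
   its derivative is positive wherever (k - 1) (1 - x) (1 - 2x) phi x < x (1 - 2 x^(k-1)); the left
   side is largest at x = a because t ln (c / t) increases for t <= c / e, and at x = a the inequality
   is a numerical estimate. *)

theory Submission
  imports Defs "HOL-Analysis.Harmonic_Numbers"
begin

section \<open>The fixed point equation in terms of phi\<close>

definition phi :: "real \<Rightarrow> real" where
  "phi t = ln ((1 - t) / (1 - 2 * t))"

lemma exp_neg_phi: "t < 1/2 \<Longrightarrow> exp (- phi t) = (1 - 2 * t) / (1 - t)"
  unfolding phi_def by (simp add: exp_minus)

lemma phi_has_real_derivative:
  "t < 1/2 \<Longrightarrow> (phi has_real_derivative 1 / ((1 - t) * (1 - 2 * t))) (at t)"
  unfolding phi_def[abs_def] by (auto intro!: derivative_eq_intros)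

lemma phi_ge: "t < 1/2 \<Longrightarrow> t / (1 - t) \<le> phi t"
proof -
  assume t: "t < 1/2"
  then have "phi t = - ln ((1 - 2 * t) / (1 - t))"
    unfolding phi_def by (simp add: ln_div)
  moreover have "ln ((1 - 2 * t) / (1 - t)) \<le> (1 - 2 * t) / (1 - t) - 1"
    using t by (intro ln_le_minus_one) simp
  moreover have "(1 - 2 * t) / (1 - t) - 1 = - (t / (1 - t))"
    using t by (simp add: field_simps)
  ultimately show ?thesis
    by linarith
qed

lemma phi_ge_self: "0 \<le> t \<Longrightarrow> t < 1/2 \<Longrightarrow> t \<le> phi t"
proof -
  assume t: "0 \<le> t" "t < 1/2"
  then have "t * (1 - t) \<le> t"
    by (simp add: algebra_simps)
  with t have "t \<le> t / (1 - t)"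
    by (simp add: le_divide_eq)
  then show ?thesis
    using phi_ge[OF t(2)] by (rule order_trans)
qed

lemma phi_pos: "0 < t \<Longrightarrow> t < 1/2 \<Longrightarrow> 0 < phi t"
  using phi_ge[of t] divide_pos_pos[of t "1 - t"] by linarith

lemma Psi_eq_exp_phi:
  fixes d x :: real
  assumes "x ^ (k - 1) < 1/2"
  defines "w \<equiv> exp (- (d - 1) * phi (x ^ (k - 1)))"
  shows "Psi k d x = (1 - w) / (2 - w)"
proof -
  have "psi_hat k x = exp (- phi (x ^ (k - 1)))"
    unfolding psi_hat_def using exp_neg_phi[OF assms(1)] by simp
  then have "psi_hat k x powr (d - 1) = w"
    unfolding powr_def w_def by (simp add: algebra_simps)
  then show ?thesis
    unfolding Psi_def psi_dot_def comp_def by simp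
qed

lemma Psi_eq_self_iff:
  assumes "0 < x" "x < 1/2" "x ^ (k - 1) < 1/2"
  shows "Psi k d x = x \<longleftrightarrow> (d - 1) * phi (x ^ (k - 1)) = phi x"
proof -
  define w where "w = exp (- (d - 1) * phi (x ^ (k - 1)))"
  have "(1 - w) / (2 - w) = x \<longleftrightarrow> w = (1 - 2 * x) / (1 - x)"
    using assms(1,2) by (cases "w = 2") (auto simp: field_simps)
  also have "\<dots> \<longleftrightarrow> w = exp (- phi x)"
    using exp_neg_phi assms(2) by simp
  finally show ?thesis
    using Psi_eq_exp_phi[OF assms(3)] by (auto simp: w_def algebra_simps)
qed

lemma exp_neg_mult_phi_le_one:
  "1 \<le> d \<Longrightarrow> 0 \<le> y \<Longrightarrow> y < 1/2 \<Longrightarrow> exp (- (d - 1) * phi y) \<le> 1"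
proof -
  assume "1 \<le> d" "0 \<le> y" "y < 1/2"
  then have "0 \<le> (d - 1) * phi y"
    using phi_ge_self[of y] by simp
  then show ?thesis
    by (simp add: algebra_simps)
qed

lemma le_Psi_iff:
  assumes "1 \<le> d" "x < 1/2" "0 \<le> x ^ (k - 1)" "x ^ (k - 1) < 1/2"
  shows "x \<le> Psi k d x \<longleftrightarrow> phi x \<le> (d - 1) * phi (x ^ (k - 1))"
proof -
  define w where "w = exp (- (d - 1) * phi (x ^ (k - 1)))"
  have "w \<le> 1"
    using exp_neg_mult_phi_le_one assms(1,3,4) by (simp add: w_def)
  then have "x \<le> (1 - w) / (2 - w) \<longleftrightarrow> w \<le> (1 - 2 * x) / (1 - x)"
    using assms(2) by (simp add: field_simps)
  also have "\<dots> \<longleftrightarrow> w \<le> exp (- phi x)"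
    using exp_neg_phi assms(2) by simp
  finally show ?thesis
    using Psi_eq_exp_phi[OF assms(4)] by (auto simp: w_def algebra_simps)
qed

lemma Psi_less_half:
  assumes "1 \<le> d" "0 \<le> x ^ (k - 1)" "x ^ (k - 1) < 1/2"
  shows "Psi k d x < 1/2"
proof -
  define w where "w = exp (- (d - 1) * phi (x ^ (k - 1)))"
  have "0 < w" "w \<le> 1"
    using exp_neg_mult_phi_le_one assms by (simp_all add: w_def)
  have "Psi k d x = (1 - w) / (2 - w)"
    unfolding w_def by (rule Psi_eq_exp_phi[OF assms(3)])
  also have "\<dots> < 1/2"
    using \<open>0 < w\<close> \<open>w \<le> 1\<close> by (simp add: field_simps)
  finally show ?thesis .
qed

lemma power_pred_less_half:
  fixes x :: real
  assumes "3 \<le> k" "0 \<le> x" "x \<le> 1/2"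
  shows "x ^ (k - 1) < 1/2"
proof -
  have "x ^ (k - 1) \<le> (1/2) ^ (k - 1)"
    using assms by (intro power_mono) auto
  also have "\<dots> \<le> (1/2) ^ 2"
    using assms(1) by (intro power_decreasing) auto
  finally show ?thesis
    by (simp add: power2_eq_square)
qed

lemma continuous_on_Psi:
  assumes "3 \<le> k" "1 \<le> d"
  shows "continuous_on {0..1/2} (Psi k d)"
proof -
  have y: "0 \<le> x ^ (k - 1) \<and> x ^ (k - 1) < 1/2" if "x \<in> {0..1/2}" for x :: real
    using power_pred_less_half[OF assms(1)] that by simp
  have pos: "0 < (1 - 2 * x ^ (k - 1)) / (1 - x ^ (k - 1))" if "x \<in> {0..1/2}" for x :: real
    using y[OF that] by simp
  have less_two: "((1 - 2 * x ^ (k - 1)) / (1 - x ^ (k - 1))) powr (d - 1) < 2"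
    if "x \<in> {0..1/2}" for x :: real
  proof -
    have "\<bar>(1 - 2 * x ^ (k - 1)) / (1 - x ^ (k - 1))\<bar> \<le> 1"
      using pos[OF that] y[OF that] by (simp add: abs_of_pos divide_le_eq)
    then have "((1 - 2 * x ^ (k - 1)) / (1 - x ^ (k - 1))) powr (d - 1) \<le> 1"
      using assms(2) by (intro powr_le1) auto
    then show ?thesis
      by linarith
  qed
  show ?thesis
    unfolding Psi_def psi_dot_def psi_hat_def comp_def
    by (intro continuous_intros) (use y pos less_two in fastforce)+
qed

lemma Psi_fixed_point_exists:
  assumes "3 \<le> k" "1 \<le> d" "0 \<le> a" "a < 1/2" "phi a \<le> (d - 1) * phi (a ^ (k - 1))"
  shows "\<exists>x \<in> {a..1/2}. Psi k d x = x"
proof -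
  have pow: "0 \<le> x ^ (k - 1) \<and> x ^ (k - 1) < 1/2" if "0 \<le> x" "x \<le> 1/2" for x :: real
    using power_pred_less_half[OF assms(1) that] that by simp
  have "0 \<le> Psi k d a - a"
    using le_Psi_iff[of d a k] assms pow[of a] by simp
  moreover have "Psi k d (1/2) - 1/2 \<le> 0"
    using Psi_less_half[of d "1/2" k] assms(2) pow[of "1/2"] by simp
  moreover have "continuous_on {a..1/2} (\<lambda>x. Psi k d x - x)"
    using continuous_on_subset[OF continuous_on_Psi[OF assms(1,2)]] assms(3)
    by (intro continuous_intros) auto
  ultimately obtain x where "a \<le> x" "x \<le> 1/2" "Psi k d x - x = 0"
    using IVT2'[of "\<lambda>x. Psi k d x - x" "1/2" 0 a] assms(4) by auto
  then show ?thesis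
    by auto
qed

section \<open>Monotonicity of phi x / phi (x^(k-1))\<close>

lemma half_minus_power_pos: "2 \<le> k \<Longrightarrow> 0 < 1/2 - 1/(2::real)^k"
proof -
  assume "2 \<le> k"
  then have "(2::real)^2 \<le> 2^k"
    by (intro power_increasing) auto
  then show ?thesis
    by (simp add: field_simps)
qed

lemma mult_ln_divide_mono:
  fixes c t t0 :: real
  assumes "0 < c" "0 < t" "t \<le> t0" "1 \<le> ln (c / t0)"
  shows "t * ln (c / t) \<le> t0 * ln (c / t0)"
proof -
  have "ln (c / t) = ln (c / t0) + ln (t0 / t)"
    using assms by (simp add: ln_div)
  moreover have "t * ln (t0 / t) \<le> t * (t0 / t - 1)"
    using assms by (intro mult_left_mono ln_le_minus_one) auto
  moreover have "t * (t0 / t - 1) = (t0 - t) * 1"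
    using assms by (simp add: field_simps)
  moreover have "(t0 - t) * 1 \<le> (t0 - t) * ln (c / t0)"
    using assms by (intro mult_left_mono) auto
  ultimately show ?thesis
    by (simp add: algebra_simps)
qed

lemma weighted_phi_le:
  assumes "0 \<le> a" "a \<le> x" "x < 1/2" "1 \<le> phi a"
  shows "(1 - x) * (1 - 2 * x) * phi x \<le> (1 - a) * (1 - 2 * a) * phi a"
proof -
  have "phi x \<le> ln ((1 - a) / (1 - 2 * x))"
    unfolding phi_def using assms by (simp add: divide_right_mono)
  then have "(1 - 2 * x) * phi x \<le> (1 - 2 * x) * ln ((1 - a) / (1 - 2 * x))"
    using assms by (intro mult_left_mono) auto
  also have "\<dots> \<le> (1 - 2 * a) * phi a"
    unfolding phi_def using assms by (intro mult_ln_divide_mono) (auto simp: phi_def)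
  finally have h: "(1 - 2 * x) * phi x \<le> (1 - 2 * a) * phi a" .
  have "(1 - x) * ((1 - 2 * x) * phi x) \<le> (1 - a) * ((1 - 2 * a) * phi a)"
    using assms phi_ge_self[of x] by (intro mult_mono[OF _ h]) auto
  then show ?thesis
    by (simp add: mult.assoc)
qed

lemma phi_half_minus_power:
  assumes "2 \<le> k"
  shows "phi (1/2 - 1/2^k) = (real k - 2) * ln 2 + ln (1 + 1/2^(k - 1))"
proof -
  obtain m where k: "k = m + 2"
    using assms by (metis add.commute le_Suc_ex)
  have "(1 - (1/2 - 1/2^k)) / (1 - 2 * (1/2 - 1/2^k)) = (2::real)^m * (1 + 1/2^(k - 1))"
    unfolding k by (simp add: field_simps)
  then have "phi (1/2 - 1/2^k) = ln (2^m * (1 + 1/2^(k - 1)))"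
    unfolding phi_def by simp
  also have "\<dots> = real m * ln 2 + ln (1 + 1/2^(k - 1))"
  proof -
    have "(0::real) < 1 + 1/2^(k - 1)"
      by (intro add_pos_pos) simp_all
    then show ?thesis
      by (simp add: ln_mult ln_realpow)
  qed
  finally show ?thesis
    unfolding k by simp
qed

lemma phi_half_minus_power_bounds:
  assumes "2 \<le> k"
  shows "(real k - 2) * ln 2 \<le> phi (1/2 - 1/2^k)"
    and "phi (1/2 - 1/2^k) \<le> (real k - 2) * ln 2 + 1/2^(k - 1)"
  using phi_half_minus_power[OF assms] ln_add_one_self_le_self[of "1/2^(k - 1)"] by simp_all

lemma square_pred_le_two_power: "5 \<le> k \<Longrightarrow> (real k - 1)^2 \<le> 2^(k - 1)"
proof (induction k rule: dec_induct)
  case base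
  then show ?case by simp
next
  case (step n)
  have "real n * 4 \<le> real n * real n"
    using step.hyps by (intro mult_left_mono) auto
  then have "(real (Suc n) - 1)^2 \<le> 2 * (real n - 1)^2"
    by (simp add: power2_eq_square algebra_simps)
  also have "\<dots> \<le> 2 * 2^(n - 1)"
    using step.IH by simp
  also have "\<dots> = 2^(Suc n - 1)"
    using step.hyps by (cases n) auto
  finally show ?case .
qed

lemma left_end_margin_numeric:
  fixes k :: nat
  defines "s \<equiv> 1/2^(k - 1) :: real"
  assumes "4 \<le> k"
  shows "real (k - 1) * ((1 + s) / 2 * s * ((real k - 2) * ln 2 + s)) < (1 - s) / 2 * (1 - 2 * s)"
proof (cases "k = 4")
  case True
  then have "s = 1/8"
    by (simp add: s_def)
  show ?thesis
    using ln2_le_25_over_36 unfolding \<open>s = 1/8\<close> True by simp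
next
  case False
  then have k: "5 \<le> k"
    using assms(2) by simp
  have "s \<le> 1/2^4"
    unfolding s_def using k by (intro divide_left_mono power_increasing) auto
  then have s: "0 < s" "s \<le> 1/16"
    by (simp_all add: s_def)
  have "(real k - 2) * ln 2 \<le> (real k - 2) * (25/36)"
    using ln2_le_25_over_36 k by (intro mult_left_mono) auto
  then have le: "(real k - 2) * ln 2 + s \<le> 7/10 * (real k - 1)"
    using s k by simp
  have "0 \<le> (real k - 2) * ln (2::real)"
    using k by simp
  have "(real k - 1)^2 * s \<le> 1"
    using square_pred_le_two_power[OF k] by (simp add: s_def)
  have "real (k - 1) * ((1 + s) / 2 * s * ((real k - 2) * ln 2 + s))
      \<le> (real k - 1) * ((17/16) / 2 * s * (7/10 * (real k - 1)))"
    using k s le \<open>0 \<le> (real k - 2) * ln 2\<close> by (intro mult_mono) (auto simp: of_nat_diff)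
  also have "\<dots> = 119/320 * ((real k - 1)^2 * s)"
    by (simp add: power2_eq_square)
  also have "\<dots> \<le> 119/320"
    using \<open>(real k - 1)^2 * s \<le> 1\<close> by (simp add: mult.commute)
  also have "\<dots> < (15/16) / 2 * (7/8)"
    by simp
  also have "\<dots> \<le> (1 - s) / 2 * (1 - 2 * s)"
    using s by (intro mult_mono) auto
  finally show ?thesis .
qed

lemma left_end_margin:
  fixes k :: nat
  defines "a \<equiv> 1/2 - 1/2^k :: real"
  assumes "4 \<le> k"
  shows "real (k - 1) * ((1 - a) * (1 - 2 * a) * phi a) < a * (1 - 2 / 2^(k - 1))"
proof -
  define s :: real where "s = 1/2^(k - 1)"
  have "(2::real)^k = 2 * 2^(k - 1)"
    using power_minus_mult[of k "2::real"] assms(2) by simp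
  then have a: "a = (1 - s) / 2" "1 - a = (1 + s) / 2" "1 - 2 * a = s" "1 - 2 / 2^(k - 1) = 1 - 2 * s"
    unfolding a_def s_def by (simp_all add: field_simps)
  have "0 < a"
    using half_minus_power_pos[of k] assms(2) unfolding a_def by simp
  then have "0 \<le> phi a"
    using phi_pos[of a] by (simp add: a_def)
  moreover have "phi a \<le> (real k - 2) * ln 2 + s"
    using phi_half_minus_power_bounds(2)[of k] assms(2) unfolding a_def s_def by simp
  ultimately have "real (k - 1) * ((1 - a) * (1 - 2 * a) * phi a)
      \<le> real (k - 1) * ((1 + s) / 2 * s * ((real k - 2) * ln 2 + s))"
    unfolding a(2,3) by (intro mult_left_mono) (auto simp: s_def)
  also have "\<dots> < (1 - s) / 2 * (1 - 2 * s)"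
    unfolding s_def by (rule left_end_margin_numeric[OF assms(2)])
  also have "\<dots> = a * (1 - 2 / 2^(k - 1))"
    by (simp only: a(1,4))
  finally show ?thesis .
qed

lemma weighted_phi_margin:
  fixes k :: nat
  defines "a \<equiv> 1/2 - 1/2^k :: real"
  assumes "4 \<le> k" "a \<le> x" "x < 1/2"
  shows "real (k - 1) * ((1 - x) * (1 - 2 * x) * phi x) < x * (1 - 2 * x ^ (k - 1))"
proof -
  have "0 < a"
    using half_minus_power_pos[of k] assms(2) unfolding a_def by simp
  have "2 * (2/3) \<le> (real k - 2) * ln (2::real)"
    using assms(2) ln2_ge_two_thirds by (intro mult_mono) auto
  then have "1 \<le> phi a"
    using phi_half_minus_power_bounds(1)[of k] assms(2) unfolding a_def by simp
  then have "real (k - 1) * ((1 - x) * (1 - 2 * x) * phi x)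
      \<le> real (k - 1) * ((1 - a) * (1 - 2 * a) * phi a)"
    using \<open>0 < a\<close> assms(3,4) by (intro mult_left_mono weighted_phi_le) auto
  also have "\<dots> < a * (1 - 2 / 2^(k - 1))"
    unfolding a_def by (rule left_end_margin[OF assms(2)])
  also have "\<dots> \<le> x * (1 - 2 * x ^ (k - 1))"
  proof (rule mult_mono)
    have "x ^ (k - 1) \<le> (1/2) ^ (k - 1)"
      using \<open>0 < a\<close> assms(3,4) by (intro power_mono) auto
    then show "1 - 2 / 2^(k - 1) \<le> 1 - 2 * x ^ (k - 1)"
      by (simp add: power_one_over)
    have "(2::real)^1 \<le> 2^(k - 1)"
      using assms(2) by (intro power_increasing) auto
    then show "0 \<le> 1 - 2 / (2::real)^(k - 1)"
      by (simp add: field_simps)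
  qed (use \<open>0 < a\<close> assms(3) in auto)
  finally show ?thesis .
qed

lemma phi_ratio_derivative_numerator_pos:
  fixes x :: real and k :: nat
  defines "y \<equiv> x ^ (k - 1)"
  assumes "0 < x" "x < 1/2" "y < 1/2"
    and margin: "real (k - 1) * ((1 - x) * (1 - 2 * x) * phi x) < x * (1 - 2 * y)"
  shows "phi x * (1 / ((1 - y) * (1 - 2 * y)) * (real (k - 1) * x ^ (k - 1 - 1)))
    < 1 / ((1 - x) * (1 - 2 * x)) * phi y"
proof -
  obtain m where m: "k - 1 = Suc m"
    using assms(4) by (cases "k - 1") (auto simp: y_def)
  define z where "z = x ^ (k - 1 - 1)"
  have yz: "y = x * z"
    unfolding y_def z_def m by simp
  have "0 < y"
    using assms(2) by (simp add: y_def)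
  have "0 < phi x" "0 < phi y"
    using assms(2-4) \<open>0 < y\<close> by (simp_all add: phi_pos)
  define A where "A = (1 - x) * (1 - 2 * x)"
  define B where "B = x * (1 - 2 * y)"
  define M where "M = real (k - 1) * (A * phi x)"
  have "0 < A" "0 < B" "0 \<le> M"
    using assms(2-4) \<open>0 < phi x\<close> by (simp_all add: A_def B_def M_def)
  have "phi x * (1 / ((1 - y) * (1 - 2 * y)) * (real (k - 1) * z)) = M * (y / (1 - y)) / (A * B)"
  proof -
    define u v where "u = 1 - y" and "v = 1 - 2 * y"
    have "0 < u" "0 < v"
      using assms(4) \<open>0 < y\<close> by (simp_all add: u_def v_def)
    show ?thesis
      unfolding M_def B_def u_def[symmetric] v_def[symmetric] unfolding yz
      using assms(2) \<open>0 < u\<close> \<open>0 < v\<close> \<open>0 < A\<close> by (simp add: field_simps)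
  qed
  also have "\<dots> \<le> M * phi y / (A * B)"
    using phi_ge[OF assms(4)] \<open>0 \<le> M\<close> \<open>0 < A\<close> \<open>0 < B\<close>
    by (intro divide_right_mono mult_left_mono) auto
  also have "\<dots> < B * phi y / (A * B)"
    using margin \<open>0 < phi y\<close> \<open>0 < A\<close> \<open>0 < B\<close>
    by (intro divide_strict_right_mono mult_strict_right_mono) (auto simp: M_def A_def B_def)
  also have "\<dots> = 1 / A * phi y"
    using \<open>0 < B\<close> by simp
  finally show ?thesis
    unfolding z_def A_def .
qed

lemma phi_ratio_has_pos_derivative:
  fixes x :: real
  assumes "0 < x" "x < 1/2" "x ^ (k - 1) < 1/2"
    and "real (k - 1) * ((1 - x) * (1 - 2 * x) * phi x) < x * (1 - 2 * x ^ (k - 1))"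
  shows "\<exists>D>0. ((\<lambda>x. phi x / phi (x ^ (k - 1))) has_real_derivative D) (at x)"
proof -
  define D1 where "D1 = 1 / ((1 - x) * (1 - 2 * x))"
  define D2 where "D2 = 1 / ((1 - x ^ (k - 1)) * (1 - 2 * x ^ (k - 1))) * (real (k - 1) * x ^ (k - 1 - 1))"
  have "((\<lambda>x. x ^ (k - 1)) has_real_derivative real (k - 1) * x ^ (k - 1 - 1)) (at x)"
    using DERIV_pow[of "k - 1" x UNIV] by simp
  from DERIV_chain'[OF this phi_has_real_derivative[OF assms(3)]]
  have "((\<lambda>x. phi (x ^ (k - 1))) has_real_derivative D2) (at x)"
    by (simp add: D2_def)
  moreover have "0 < phi (x ^ (k - 1))"
    using assms(1,3) by (simp add: phi_pos)
  ultimately have "((\<lambda>x. phi x / phi (x ^ (k - 1))) has_real_derivative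
      (D1 * phi (x ^ (k - 1)) - phi x * D2) / (phi (x ^ (k - 1)) * phi (x ^ (k - 1)))) (at x)"
    unfolding D1_def by (intro DERIV_divide phi_has_real_derivative assms(2)) auto
  moreover have "0 < (D1 * phi (x ^ (k - 1)) - phi x * D2) / (phi (x ^ (k - 1)) * phi (x ^ (k - 1)))"
    using phi_ratio_derivative_numerator_pos[OF assms] \<open>0 < phi (x ^ (k - 1))\<close>
    unfolding D1_def D2_def by simp
  ultimately show ?thesis
    by blast
qed

lemma phi_ratio_strict_mono_on:
  fixes k :: nat
  defines "a \<equiv> 1/2 - 1/2^k :: real"
  assumes "4 \<le> k"
  shows "strict_mono_on {a..<1/2} (\<lambda>x. phi x / phi (x ^ (k - 1)))"
proof (rule strict_mono_onI)
  have "0 < a"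
    using half_minus_power_pos[of k] assms(2) unfolding a_def by simp
  fix x1 x2 :: real
  assume x12: "x1 \<in> {a..<1/2}" "x2 \<in> {a..<1/2}" "x1 < x2"
  show "phi x1 / phi (x1 ^ (k - 1)) < phi x2 / phi (x2 ^ (k - 1))"
  proof (rule DERIV_pos_imp_increasing[OF x12(3)])
    fix x
    assume "x1 \<le> x" "x \<le> x2"
    with x12 have x: "a \<le> x" "x < 1/2"
      by auto
    have "0 < x"
      using \<open>0 < a\<close> x(1) by linarith
    have "x ^ (k - 1) < 1/2"
      by (rule power_pred_less_half) (use assms(2) \<open>0 < x\<close> x(2) in auto)
    from phi_ratio_has_pos_derivative[OF \<open>0 < x\<close> x(2) this
        weighted_phi_margin[OF assms(2) x[unfolded a_def]]]
    show "\<exists>D. ((\<lambda>x. phi x / phi (x ^ (k - 1))) has_real_derivative D) (at x) \<and> 0 < D"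
      by blast
  qed
qed

lemma Psi_fixed_point_unique:
  fixes k :: nat
  defines "a \<equiv> 1/2 - 1/2^k :: real"
  assumes "4 \<le> k" "1 \<le> d"
    and "x1 \<in> {a..1/2}" "Psi k d x1 = x1" "x2 \<in> {a..1/2}" "Psi k d x2 = x2"
  shows "x1 = x2"
proof -
  have "0 < a"
    using half_minus_power_pos[of k] assms(2) unfolding a_def by simp
  have ratio: "x \<in> {a..<1/2} \<and> phi x / phi (x ^ (k - 1)) = d - 1"
    if "x \<in> {a..1/2}" "Psi k d x = x" for x
  proof -
    have y: "0 < x ^ (k - 1)" "x ^ (k - 1) < 1/2"
      using power_pred_less_half[of k x] assms(2) that(1) \<open>0 < a\<close> by auto
    then have "x < 1/2"
      using Psi_less_half[of d x k] assms(3) that(2) by simp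
    then have "(d - 1) * phi (x ^ (k - 1)) = phi x"
      using Psi_eq_self_iff[of x k d] that \<open>0 < a\<close> y by auto
    then have "phi x / phi (x ^ (k - 1)) = d - 1"
      using phi_pos[OF y] by (simp add: field_simps)
    then show ?thesis
      using that(1) \<open>x < 1/2\<close> by simp
  qed
  show ?thesis
    using strict_mono_on_imp_inj_on[OF phi_ratio_strict_mono_on[OF assms(2)]]
      ratio[OF assms(4,5)] ratio[OF assms(6,7)]
    unfolding a_def inj_on_def by auto
qed

section \<open>The inequality at the left end point\<close>

(* 9/2 and 3753/3410 are the arguments of ln in phi (7/16) and phi ((7/16)^3). The estimate is
   tight (the ratio of the logarithms is about 15.69), so r^(2^j) is bounded below by repeated
   squaring, rounding down at each step. *)
lemma nine_halves_pow_le: "(9/2::real)^10 \<le> (3753/3410)^157"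
proof -
  define r :: real where "r = 3753/3410"
  have square: "c' \<le> r ^ (2 * n)" if "c' \<le> c * c" "0 \<le> c" "c \<le> r ^ n" for c' c :: real and n
  proof -
    have "c * c \<le> r ^ n * r ^ n"
      using that(2,3) by (intro mult_mono) auto
    then show ?thesis
      using that(1) by (simp add: mult_2 power_add)
  qed
  have r1: "550293/500000 \<le> r"
    by (simp add: r_def)
  have r2: "1211289/1000000 \<le> r^2"
    using square[of "1211289/1000000" "550293/500000" 1] r1 by simp
  have r4: "1467221/1000000 \<le> r^4"
    using square[of "1467221/1000000" "1211289/1000000" 2] r2 by simp
  have r8: "2152737/1000000 \<le> r^8"
    using square[of "2152737/1000000" "1467221/1000000" 4] r4 by simp
  have r16: "1158569/250000 \<le> r^16"
    using square[of "1158569/250000" "2152737/1000000" 8] r8 by simp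
  have r32: "10738257/500000 \<le> r^32"
    using square[of "10738257/500000" "1158569/250000" 16] r16 by simp
  have r64: "461240653/1000000 \<le> r^64"
    using square[of "461240653/1000000" "10738257/500000" 32] r32 by simp
  have r128: "212742939979/1000000 \<le> r^128"
    using square[of "212742939979/1000000" "461240653/1000000" 64] r64 by simp
  have "(9/2::real)^10 \<le> (212742939979/1000000) * (1158569/250000) * (2152737/1000000)
      * (1467221/1000000) * (550293/500000)"
    by (simp add: eval_nat_numeral)
  also have "\<dots> \<le> r^128 * r^16 * r^8 * r^4 * r"
    using r1 r4 r8 r16 r128 by (intro mult_mono) auto
  also have "\<dots> = r^157"
    by (simp flip: power_add power_Suc2)
  finally show ?thesis
    by (simp only: r_def)
qed

lemma left_end_phi_le_k4:
  assumes "167/10 \<le> d"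
  shows "phi (1/2 - 1/2^4) \<le> (d - 1) * phi ((1/2 - 1/2^4) ^ (4 - 1))"
proof -
  have "ln ((9/2::real)^10) \<le> ln ((3753/3410)^157)"
    using nine_halves_pow_le by (subst ln_le_cancel_iff) (rule zero_less_power; simp)+
  then have "10 * ln (9/2::real) \<le> 157 * ln (3753/3410)"
    by (simp only: ln_realpow of_nat_numeral)
  also have "\<dots> \<le> 10 * ((d - 1) * ln (3753/3410))"
    using mult_right_mono[of 157 "10 * (d - 1)" "ln (3753/3410)"] assms by simp
  finally have "ln (9/2) \<le> (d - 1) * ln (3753/3410)"
    by linarith
  then show ?thesis
    by (simp add: phi_def eval_nat_numeral)
qed

lemma phi_half_minus_power_pow_ge:
  fixes k :: nat
  defines "a \<equiv> 1/2 - 1/2^k :: real" and "s \<equiv> 1/2^(k - 1) :: real"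
  assumes "3 \<le> k"
  shows "s * (1 - real (k - 1) * s) \<le> phi (a ^ (k - 1))"
proof -
  have "(2::real)^k = 2 * 2^(k - 1)"
    using power_minus_mult[of k "2::real"] assms(3) by simp
  then have a: "a = (1 - s) / 2"
    unfolding a_def s_def by (simp add: field_simps)
  have "a ^ (k - 1) = (1 - s) ^ (k - 1) / 2^(k - 1)"
    unfolding a by (simp add: power_divide)
  then have pow: "a ^ (k - 1) = s * (1 - s) ^ (k - 1)"
    by (simp add: s_def)
  have "s \<le> 1/2^2"
    unfolding s_def using assms(3) by (intro divide_left_mono power_increasing) auto
  then have s: "0 < s" "s \<le> 1/4"
    by (simp_all add: s_def)
  have "1 + real (k - 1) * (- s) \<le> (1 + (- s)) ^ (k - 1)"
    using s by (intro Bernoulli_inequality) simp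
  then have "s * (1 - real (k - 1) * s) \<le> a ^ (k - 1)"
    unfolding pow using s by (intro mult_left_mono) auto
  also have "a ^ (k - 1) \<le> phi (a ^ (k - 1))"
  proof (rule phi_ge_self)
    have "(1 - s) ^ (k - 1) \<le> 1"
      using s by (intro power_le_one) auto
    then have "s * (1 - s) ^ (k - 1) \<le> s"
      using s by (intro mult_left_le) auto
    then show "a ^ (k - 1) < 1/2"
      unfolding pow using s by linarith
  qed (use s in \<open>simp add: a\<close>)
  finally show ?thesis .
qed

lemma quadratic_le_two_power: "6 \<le> k \<Longrightarrow> real k * (real k + 1) + 22 \<le> 2^k"
proof (induction k rule: dec_induct)
  case base
  then show ?case by simp
next
  case (step n)
  have "real n * 1 \<le> real n * real n"
    using step.hyps by (intro mult_left_mono) auto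
  then have "real (Suc n) * (real (Suc n) + 1) + 22 \<le> 2 * (real n * (real n + 1) + 22)"
    by (simp add: algebra_simps)
  also have "\<dots> \<le> 2 * 2^n"
    using step.IH by simp
  finally show ?case
    by simp
qed

lemma left_end_numeric_ge5:
  fixes k :: nat
  defines "s \<equiv> 1/2^(k - 1) :: real"
  assumes "5 \<le> k"
  shows "(real k - 2) * ln 2 + s
    \<le> ((2^(k - 1) - 2) * real k * ln 2 - 1) * (s * (1 - real (k - 1) * s))"
proof -
  define K L where "K = real k" and "L = ln (2::real)"
  have s: "0 < s" "2^(k - 1) = 1 / s"
    by (simp_all add: s_def)
  have L: "2/3 \<le> L"
    unfolding L_def by (rule ln2_ge_two_thirds)
  have "((1 / s - 2) * K * L - 1) * (s * (1 - (K - 1) * s))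
      = K * L - K * (K + 1) * L * s - s + (2 * K * (K - 1) * L * s^2 + (K - 1) * s^2)"
    using s by (simp add: field_simps power2_eq_square)
  moreover have "(K - 2) * L + s \<le> K * L - K * (K + 1) * L * s - s + (2 * K * (K - 1) * L * s^2 + (K - 1) * s^2)"
  proof (cases "k = 5")
    case True
    have s5: "s = 1/16" and K5: "K = 5"
      using True by (simp_all add: s_def K_def)
    show ?thesis
      unfolding s5 K5 using L by (simp add: power2_eq_square)
  next
    case False
    then have k6: "6 \<le> k"
      using assms(2) by simp
    have "(2::real)^k = 2 / s"
      using power_minus_mult[of k "2::real"] s k6 by simp
    have "s * (K * (K + 1) + 22) \<le> s * 2^k"
      using quadratic_le_two_power[OF k6] s(1) unfolding K_def by (intro mult_left_mono) auto
    also have "\<dots> = 2"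
      using \<open>2^k = 2 / s\<close> s(1) by simp
    finally have "s * (K * (K + 1) + 22) \<le> 2" .
    from mult_right_mono[OF this, of L] L
    have "K * (K + 1) * L * s \<le> 2 * L - 22 * L * s"
      by (simp add: algebra_simps)
    moreover have "2 * s \<le> 22 * L * s"
      using L s(1) by simp
    moreover have "0 \<le> 2 * K * (K - 1) * L * s^2 + (K - 1) * s^2"
      using k6 L unfolding K_def by simp
    ultimately show ?thesis
      by (simp add: algebra_simps)
  qed
  ultimately show ?thesis
    unfolding K_def L_def using s assms(2) by (simp add: of_nat_diff)
qed

lemma left_end_phi_le_ge5:
  fixes k :: nat
  defines "a \<equiv> 1/2 - 1/2^k :: real"
  assumes "5 \<le> k" "(2^(k - 1) - 2) * real k * ln 2 \<le> d"
  shows "phi a \<le> (d - 1) * phi (a ^ (k - 1))"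
proof -
  define s :: real where "s = 1/2^(k - 1)"
  have "(2::real)^4 \<le> 2^(k - 1)"
    using assms(2) by (intro power_increasing) auto
  then have "14 * 5 * (2/3) \<le> (2^(k - 1) - 2) * real k * ln (2::real)"
    using assms(2) ln2_ge_two_thirds by (intro mult_mono) auto
  then have coeff: "0 \<le> (2^(k - 1) - 2) * real k * ln 2 - 1"
    by simp
  have "real (k - 1) < 2^(k - 1)"
    using of_nat_less_iff[THEN iffD2, OF less_exp[of "k - 1"]] by simp
  then have "0 \<le> s * (1 - real (k - 1) * s)"
    by (simp add: s_def field_simps)
  have "phi a \<le> (real k - 2) * ln 2 + s"
    using phi_half_minus_power_bounds(2)[of k] assms(2) unfolding a_def s_def by simp
  also have "\<dots> \<le> ((2^(k - 1) - 2) * real k * ln 2 - 1) * (s * (1 - real (k - 1) * s))"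
    unfolding s_def by (rule left_end_numeric_ge5[OF assms(2)])
  also have "\<dots> \<le> (d - 1) * phi (a ^ (k - 1))"
    using assms(3) coeff \<open>0 \<le> s * (1 - real (k - 1) * s)\<close> phi_half_minus_power_pow_ge[of k] assms(2)
    unfolding a_def s_def by (intro mult_mono) auto
  finally show ?thesis .
qed

theorem lemma3p1:
  fixes k :: nat and d :: real
  assumes "k \<ge> 4"
    and "(k \<ge> 5 \<and> (2 ^ (k - 1) - 2) * real k * ln 2 \<le> d \<and> d \<le> 2 ^ (k - 1) * real k * ln 2)
         \<or> (k = 4 \<and> 167 / 10 \<le> d \<and> d \<le> 32 * ln 2)"
  shows "\<exists>!x. x \<in> {1/2 - 1/2^k .. 1/2} \<and> Psi k d x = x"
proof -
  define a :: real where "a = 1/2 - 1/2^k"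
  have a: "0 < a" "a < 1/2"
    unfolding a_def using assms(1) half_minus_power_pos[of k] by simp_all
  have left_end: "phi a \<le> (d - 1) * phi (a ^ (k - 1))"
    using assms(2) left_end_phi_le_ge5[of k d] left_end_phi_le_k4[of d] unfolding a_def by auto
  have "0 < (d - 1) * phi (a ^ (k - 1))"
    using left_end phi_pos[OF a] by linarith
  moreover have "0 < phi (a ^ (k - 1))"
    by (rule phi_pos) (use a power_pred_less_half[of k a] assms(1) in auto)
  ultimately have "1 \<le> d"
    by (simp add: zero_less_mult_iff)
  show ?thesis
  proof (rule ex_ex1I)
    show "\<exists>x. x \<in> {1/2 - 1/2^k..1/2} \<and> Psi k d x = x"
      using Psi_fixed_point_exists[of k d a] assms(1) \<open>1 \<le> d\<close> a left_end unfolding a_def by auto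
  next
    show "x1 = x2" if "x1 \<in> {1/2 - 1/2^k..1/2} \<and> Psi k d x1 = x1"
      and "x2 \<in> {1/2 - 1/2^k..1/2} \<and> Psi k d x2 = x2" for x1 x2
      using Psi_fixed_point_unique[OF assms(1) \<open>1 \<le> d\<close>] that by blast
  qed
qed

end
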